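(* Let $(X,d)$ be a compact metric space and $f\in\mathcal{H}(X)$. If $\dim X=0$ and every point of $X$ is a periodic point of $f$ (i.e. $X=Per(f)$), then $f$ is equicontinuous and has the strict periodic shadowing property.
   Context: Equicontinuous: for every $\epsilon>0$ there is $\delta>0$ with $d(x,y)\le\delta\Rightarrow\sup_{i\in\mathbb{Z}}d(f^i(x),f^i(y))\le\epsilon$. Strict periodic shadowing property: for every $\epsilon>0$ there is $\delta>0$ such that for every $(x_i)_{i=0}^m$, $m\ge1$, with $d(f(x_i),x_{i+1})\le\delta$ for $0\le i<m$ and $x_0=x_m$, there is $p\in X$ with $f^m(p)=p$ and $d(x_i,f^i(p))\le\epsilon$ for $0\le i\le m$. *)

theory Defs
  imports "HOL-Analysis.Analysis"
begin

definition fiter :: "'a set \<Rightarrow> ('a \<Rightarrow> 'a) \<Rightarrow> int \<Rightarrow> 'a \<Rightarrow> 'a" where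
  "fiter S f i x = (if 0 \<le> i then (f ^^ nat i) x else (inv_into S f ^^ nat (- i)) x)"

text \<open>Small inductive dimension zero: S nonempty (ind of the empty space is -1) and every
  point has a neighbourhood base of relatively clopen sets.\<close>
definition zero_dim :: "'a::topological_space set \<Rightarrow> bool" where
  "zero_dim S \<longleftrightarrow> S \<noteq> {} \<and>
     (\<forall>x\<in>S. \<forall>V. openin (top_of_set S) V \<and> x \<in> V \<longrightarrow>
        (\<exists>U. openin (top_of_set S) U \<and> closedin (top_of_set S) U \<and> x \<in> U \<and> U \<subseteq> V))"

definition periodic_point :: "('a \<Rightarrow> 'a) \<Rightarrow> 'a \<Rightarrow> bool" where
  "periodic_point f x \<longleftrightarrow> (\<exists>n>0. (f ^^ n) x = x)"

definition equicontinuous_on :: "'a::metric_space set \<Rightarrow> ('a \<Rightarrow> 'a) \<Rightarrow> bool" where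
  "equicontinuous_on S f \<longleftrightarrow>
     (\<forall>e>0. \<exists>d>0. \<forall>x\<in>S. \<forall>y\<in>S. dist x y \<le> d \<longrightarrow>
        (\<forall>i::int. dist (fiter S f i x) (fiter S f i y) \<le> e))"

definition strict_periodic_shadowing :: "'a::metric_space set \<Rightarrow> ('a \<Rightarrow> 'a) \<Rightarrow> bool" where
  "strict_periodic_shadowing S f \<longleftrightarrow>
     (\<forall>e>0. \<exists>d>0. \<forall>m::nat. \<forall>xs::nat \<Rightarrow> 'a.
        m \<ge> 1 \<and> (\<forall>i\<le>m. xs i \<in> S) \<and> (\<forall>i<m. dist (f (xs i)) (xs (Suc i)) \<le> d) \<and> xs 0 = xs m
        \<longrightarrow> (\<exists>p\<in>S. (f ^^ m) p = p \<and> (\<forall>i\<le>m. dist (xs i) ((f ^^ i) p) \<le> e)))"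

end

theory Submission
  imports Defs
begin

text \<open>
  Fix a finite family \<open>\<U>\<close> of clopen sets and call two points equivalent if their forward
  orbits lie in the same members of \<open>\<U>\<close> at all times. Each class is open, since agreement
  with \<open>z\<close> up to some finite time already forces agreement forever: otherwise, reading the
  orbits backwards from the first disagreement, compactness yields a point that disagrees
  with a point of the finite orbit of \<open>z\<close> now but agrees with it at all past times, which is
  impossible as both points return to themselves. A Lebesgue number of the classes gives
  \<open>\<delta> > 0\<close> such that \<open>\<delta>\<close>-close points are equivalent, and so are the points of a
  \<open>\<delta>\<close>-pseudo-orbit and those of the true orbit of its start.

  Since \<open>S\<close> is zero-dimensional, \<open>\<U>\<close> can have arbitrarily small mesh, which gives
  equicontinuity (backward iterates of periodic points are forward iterates). For strict
  periodic shadowing, \<open>\<U>\<close> is in addition chosen finer than the gaps between the orbit points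
  of a periodic point \<open>y\<close> near the start of the pseudo-orbit, for finitely many \<open>y\<close> given by
  compactness; a closed pseudo-orbit of length \<open>m\<close> then forces \<open>f\<^sup>m y = y\<close>.
\<close>

lemma funpow_mem: "h ` S \<subseteq> S \<Longrightarrow> x \<in> S \<Longrightarrow> (h ^^ n) x \<in> S"
  by (induction n) auto

lemma continuous_on_funpow:
  assumes "continuous_on S h" "h ` S \<subseteq> S"
  shows "continuous_on S (h ^^ n)"
proof (induction n)
  case (Suc n)
  have "continuous_on S (h \<circ> (h ^^ n))"
    using Suc assms funpow_mem[OF assms(2)]
    by (intro continuous_on_compose) (auto intro: continuous_on_subset)
  then show ?case by simp
qed (simp add: continuous_on_id)

lemma funpow_mult_fixpoint: "(f ^^ q) x = x \<Longrightarrow> (f ^^ (q * j)) x = x"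
  by (metis funpow_0 funpow_mod_eq mod_mult_self2_is_0 mult.commute)

lemma funpow_left_inverse:
  assumes "\<forall>x\<in>S. g (f x) = x" "f ` S \<subseteq> S" "x \<in> S" "k \<le> r"
  shows "(g ^^ k) ((f ^^ r) x) = (f ^^ (r - k)) x"
  using assms(4)
proof (induction k)
  case (Suc k)
  have "r - k = Suc (r - Suc k)" using Suc.prems by simp
  then have "(g ^^ Suc k) ((f ^^ r) x) = g (f ((f ^^ (r - Suc k)) x))"
    using Suc by (simp only: funpow.simps comp_apply)
  also have "\<dots> = (f ^^ (r - Suc k)) x"
    by (simp add: assms(1) funpow_mem[OF assms(2,3)])
  finally show ?case .
qed simp

lemma finite_periodic_orbit:
  assumes "n > 0" "(f ^^ n) x = x"
  shows "finite (range (\<lambda>t. (f ^^ t) x))"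
proof -
  have "(f ^^ t) x \<in> (\<lambda>t. (f ^^ t) x) ` {..<n}" for t
    using assms(1) funpow_mod_eq[OF assms(2), of t] by (metis image_eqI lessThan_iff mod_less_divisor)
  then have "range (\<lambda>t. (f ^^ t) x) = (\<lambda>t. (f ^^ t) x) ` {..<n}" by blast
  then show ?thesis by simp
qed

lemma compact_decseq_Inter_nonempty:
  assumes "compact S" "\<And>n. closed (K n)" "\<And>n. K n \<noteq> {}" "\<And>n. K n \<subseteq> S" "decseq K"
  shows "(\<Inter>n. K n) \<noteq> {}"
proof -
  have "S \<inter> (\<Inter>n. K n) \<noteq> {}"
  proof (rule compact_imp_fip_image[OF assms(1,2)])
    fix I :: "nat set" assume "finite I"
    then have "K (Max (insert 0 I)) \<subseteq> K n" if "n \<in> I" for n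
      using that \<open>decseq K\<close> by (simp add: decseqD)
    then have "K (Max (insert 0 I)) \<subseteq> S \<inter> (\<Inter>n\<in>I. K n)"
      using assms(4) by blast
    then show "S \<inter> (\<Inter>n\<in>I. K n) \<noteq> {}" using assms(3) by blast
  qed
  then show ?thesis by blast
qed

definition finite_clopen_family :: "'a::topological_space set \<Rightarrow> 'a set set \<Rightarrow> bool" where
  "finite_clopen_family S \<U> \<longleftrightarrow>
     finite \<U> \<and> (\<forall>U\<in>\<U>. openin (top_of_set S) U \<and> closedin (top_of_set S) U)"

lemma finite_clopen_family_UN:
  "finite I \<Longrightarrow> (\<And>i. i \<in> I \<Longrightarrow> finite_clopen_family S (\<U> i))
    \<Longrightarrow> finite_clopen_family S (\<Union>i\<in>I. \<U> i)"
  by (auto simp: finite_clopen_family_def)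

definition same_cells :: "'a set set \<Rightarrow> 'a \<Rightarrow> 'a \<Rightarrow> bool" where
  "same_cells \<U> u v \<longleftrightarrow> (\<forall>U\<in>\<U>. u \<in> U \<longleftrightarrow> v \<in> U)"

definition same_itinerary :: "'a set set \<Rightarrow> ('a \<Rightarrow> 'a) \<Rightarrow> 'a \<Rightarrow> 'a \<Rightarrow> bool" where
  "same_itinerary \<U> f x y \<longleftrightarrow> (\<forall>t. same_cells \<U> ((f ^^ t) x) ((f ^^ t) y))"

lemma same_itinerary_refl: "same_itinerary \<U> f x x"
  by (simp add: same_itinerary_def same_cells_def)

lemma same_itinerary_sym: "same_itinerary \<U> f x y \<Longrightarrow> same_itinerary \<U> f y x"
  by (auto simp: same_itinerary_def same_cells_def)

lemma same_itinerary_trans: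
  "same_itinerary \<U> f x y \<Longrightarrow> same_itinerary \<U> f y z \<Longrightarrow> same_itinerary \<U> f x z"
  by (auto simp: same_itinerary_def same_cells_def)

lemma same_itinerary_subfamily:
  "same_itinerary \<U> f x y \<Longrightarrow> \<V> \<subseteq> \<U> \<Longrightarrow> same_itinerary \<V> f x y"
  by (auto simp: same_itinerary_def same_cells_def)

lemma same_itinerary_funpow:
  "same_itinerary \<U> f x y \<Longrightarrow> same_itinerary \<U> f ((f ^^ k) x) ((f ^^ k) y)"
  unfolding same_itinerary_def by (metis comp_apply funpow_add)

lemma same_itinerary_imp_same_cells: "same_itinerary \<U> f x y \<Longrightarrow> same_cells \<U> x y"
  by (metis funpow_0 same_itinerary_def)

lemma same_cells_dist_less:
  assumes "S \<subseteq> \<Union>\<U>" "\<forall>U\<in>\<U>. \<forall>a\<in>U. \<forall>b\<in>U. dist a b < e" "u \<in> S" "same_cells \<U> u v"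
  shows "dist u v < e"
  using assms by (auto simp: same_cells_def)

lemma same_cells_clopenin:
  assumes "finite_clopen_family S \<U>"
  shows "openin (top_of_set S) {u\<in>S. same_cells \<U> u c}"
    and "closedin (top_of_set S) {u\<in>S. same_cells \<U> u c}"
proof -
  define F where "F U = (if c \<in> U then U else S - U)" for U
  have eq: "{u\<in>S. same_cells \<U> u c} = \<Inter>(insert S (F ` \<U>))"
    by (auto simp: same_cells_def F_def split: if_splits)
  have F: "openin (top_of_set S) (F U) \<and> closedin (top_of_set S) (F U)" if "U \<in> \<U>" for U
    using assms that by (auto simp: F_def finite_clopen_family_def)
  have "finite \<U>" using assms by (simp add: finite_clopen_family_def)
  then show "openin (top_of_set S) {u\<in>S. same_cells \<U> u c}"
    and "closedin (top_of_set S) {u\<in>S. same_cells \<U> u c}"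
    unfolding eq using F by (intro openin_Inter closedin_Inter; auto)+
qed

lemma same_cells_preimage_clopenin:
  assumes "finite_clopen_family S \<U>" "continuous_on S h" "h ` S \<subseteq> S"
  shows "openin (top_of_set S) {u\<in>S. same_cells \<U> (h u) c}"
    and "closedin (top_of_set S) {u\<in>S. same_cells \<U> (h u) c}"
proof -
  have eq: "{u\<in>S. same_cells \<U> (h u) c} = S \<inter> h -` {v\<in>S. same_cells \<U> v c}"
    using assms(3) by auto
  have "h \<in> S \<rightarrow> S" using assms(3) by auto
  then show "openin (top_of_set S) {u\<in>S. same_cells \<U> (h u) c}"
    and "closedin (top_of_set S) {u\<in>S. same_cells \<U> (h u) c}"
    unfolding eq using same_cells_clopenin[OF assms(1)] assms(2)
    by (blast intro: continuous_openin_preimage continuous_closedin_preimage_gen)+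
qed

lemma zero_dim_fine_clopen_cover:
  fixes S :: "'a::metric_space set"
  assumes "compact S" "zero_dim S" "e > 0"
  obtains \<U> where "finite_clopen_family S \<U>" "S \<subseteq> \<Union>\<U>"
    "\<forall>U\<in>\<U>. \<forall>a\<in>U. \<forall>b\<in>U. dist a b < e"
proof -
  have "\<exists>U. openin (top_of_set S) U \<and> closedin (top_of_set S) U \<and> x \<in> U \<and> U \<subseteq> ball x (e/2)"
    if "x \<in> S" for x
    using assms(2,3) that unfolding zero_dim_def
    by (metis Int_subset_iff centre_in_ball half_gt_zero IntI openin_open_Int open_ball)
  then obtain C where C: "\<And>x. x \<in> S \<Longrightarrow> openin (top_of_set S) (C x) \<and>
      closedin (top_of_set S) (C x) \<and> x \<in> C x \<and> C x \<subseteq> ball x (e/2)"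
    by metis
  have "compactin (top_of_set S) S"
    using assms(1) by (simp add: compactin_subtopology)
  moreover have "\<forall>U\<in>C ` S. openin (top_of_set S) U" "S \<subseteq> \<Union>(C ` S)"
    using C by blast+
  ultimately obtain \<U> where \<U>: "finite \<U>" "\<U> \<subseteq> C ` S" "S \<subseteq> \<Union>\<U>"
    unfolding compactin_def by blast
  show thesis
  proof
    show "finite_clopen_family S \<U>" using \<U> C by (auto simp: finite_clopen_family_def)
    show "S \<subseteq> \<Union>\<U>" by (fact \<U>(3))
    have "dist a b < e" if "x \<in> S" "a \<in> C x" "b \<in> C x" for x a b
      using C[OF that(1)] that by (intro dist_triangle_half_l[of a x e b]) (auto simp: dist_commute)
    then show "\<forall>U\<in>\<U>. \<forall>a\<in>U. \<forall>b\<in>U. dist a b < e" using \<U>(2) by blast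
  qed
qed

locale periodic_homeomorphism =
  fixes S :: "'a::metric_space set" and f g :: "'a \<Rightarrow> 'a"
  assumes compact: "compact S"
    and homeomorphism: "homeomorphism S S f g"
    and periodic: "\<forall>x\<in>S. periodic_point f x"
begin

lemma f_image: "f ` S \<subseteq> S" and g_image: "g ` S \<subseteq> S"
  and continuous_f: "continuous_on S f" and continuous_g: "continuous_on S g"
  and g_f: "\<forall>x\<in>S. g (f x) = x"
  using homeomorphism by (auto simp: homeomorphism_def)

lemma funpow_f_mem: "x \<in> S \<Longrightarrow> (f ^^ n) x \<in> S"
  by (rule funpow_mem[OF f_image])

lemma obtain_period:
  assumes "x \<in> S"
  obtains n where "n > 0" "(f ^^ n) x = x"
  using periodic assms by (auto simp: periodic_point_def)

lemma g_period: "x \<in> S \<Longrightarrow> (f ^^ n) x = x \<Longrightarrow> (g ^^ n) x = x"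
  using funpow_left_inverse[OF g_f f_image, of x n n] by simp

definition split_after :: "'a set set \<Rightarrow> nat \<Rightarrow> 'a \<Rightarrow> 'a set" where
  "split_after \<U> T c = {u\<in>S. \<not> same_cells \<U> u c \<and>
     (\<forall>k\<in>{1..T}. same_cells \<U> ((g ^^ k) u) ((g ^^ k) c))}"

lemma split_after_antimono: "T \<le> T' \<Longrightarrow> split_after \<U> T' c \<subseteq> split_after \<U> T c"
  by (auto simp: split_after_def)

lemma closed_split_after:
  assumes "finite_clopen_family S \<U>"
  shows "closed (split_after \<U> T c)"
proof -
  have "split_after \<U> T c = \<Inter>(insert (S - {u\<in>S. same_cells \<U> u c})
      ((\<lambda>k. {u\<in>S. same_cells \<U> ((g ^^ k) u) ((g ^^ k) c)}) ` {1..T}))"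
    by (auto simp: split_after_def)
  also have "closedin (top_of_set S) \<dots>"
    using same_cells_clopenin[OF assms]
      same_cells_preimage_clopenin[OF assms continuous_on_funpow[OF continuous_g g_image]
        image_subsetI[OF funpow_mem[OF g_image]]]
    by (intro closedin_Inter) auto
  finally show ?thesis
    using closedin_closed_trans compact_imp_closed[OF compact] by blast
qed

text \<open>By compactness some point would split from \<open>c\<close> now after agreeing with it at all
  past times; but at a common period of the two points they are back where they split.\<close>
lemma split_after_eventually_empty:
  assumes "finite_clopen_family S \<U>" "c \<in> S"
  shows "\<exists>T. split_after \<U> T c = {}"
proof (rule ccontr)
  assume "\<nexists>T. split_after \<U> T c = {}"
  moreover have "decseq (\<lambda>T. split_after \<U> T c)"
    by (simp add: decseq_def split_after_antimono)
  ultimately have "(\<Inter>T. split_after \<U> T c) \<noteq> {}"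
    using closed_split_after[OF assms(1)]
    by (intro compact_decseq_Inter_nonempty[OF compact]) (auto simp: split_after_def)
  then obtain e where e: "\<And>T. e \<in> split_after \<U> T c" by blast
  then have "e \<in> S" "\<not> same_cells \<U> e c" by (auto simp: split_after_def)
  obtain p where p: "p > 0" "(f ^^ p) e = e" using obtain_period[OF \<open>e \<in> S\<close>] .
  obtain q where q: "q > 0" "(f ^^ q) c = c" using obtain_period[OF \<open>c \<in> S\<close>] .
  have "(g ^^ (p * q)) e = e"
    using g_period[OF \<open>e \<in> S\<close> funpow_mult_fixpoint[OF p(2)]] .
  moreover have "(g ^^ (p * q)) c = c"
    using g_period[OF \<open>c \<in> S\<close> funpow_mult_fixpoint[OF q(2)]] by (simp add: mult.commute)
  moreover have "same_cells \<U> ((g ^^ (p * q)) e) ((g ^^ (p * q)) c)"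
    using e[of "p * q"] p q by (simp add: split_after_def)
  ultimately show False using \<open>\<not> same_cells \<U> e c\<close> by simp
qed

lemma first_split_in_split_after:
  assumes "w \<in> S" "z \<in> S" "\<forall>t\<le>T. same_cells \<U> ((f ^^ t) w) ((f ^^ t) z)"
    and "\<not> same_itinerary \<U> f w z"
  obtains r where "(f ^^ r) w \<in> split_after \<U> T ((f ^^ r) z)"
proof -
  have ex: "\<exists>r. \<not> same_cells \<U> ((f ^^ r) w) ((f ^^ r) z)"
    using assms(4) by (simp add: same_itinerary_def)
  define r where "r = (LEAST r. \<not> same_cells \<U> ((f ^^ r) w) ((f ^^ r) z))"
  have split: "\<not> same_cells \<U> ((f ^^ r) w) ((f ^^ r) z)"
    unfolding r_def by (rule LeastI_ex[OF ex])
  have before: "same_cells \<U> ((f ^^ t) w) ((f ^^ t) z)" if "t < r" for t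
    using not_less_Least[OF that[unfolded r_def]] by blast
  have "T < r" using assms(3) split by (meson not_le)
  have "same_cells \<U> ((g ^^ k) ((f ^^ r) w)) ((g ^^ k) ((f ^^ r) z))" if "k \<in> {1..T}" for k
  proof -
    have "k \<le> r" using that \<open>T < r\<close> by simp
    then show ?thesis
      using before[of "r - k"] that funpow_left_inverse[OF g_f f_image] assms(1,2) by simp
  qed
  then show thesis
    using that[of r] split funpow_f_mem[OF assms(1)] by (simp add: split_after_def)
qed

lemma itinerary_finite_prefix:
  assumes "finite_clopen_family S \<U>" "z \<in> S"
  obtains T where "\<And>w. w \<in> S \<Longrightarrow> \<forall>t\<le>T. same_cells \<U> ((f ^^ t) w) ((f ^^ t) z)
    \<Longrightarrow> same_itinerary \<U> f w z"
proof -
  define orbit where "orbit = range (\<lambda>t. (f ^^ t) z)"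
  obtain n where "n > 0" "(f ^^ n) z = z" using obtain_period[OF assms(2)] .
  then have "finite orbit" unfolding orbit_def by (rule finite_periodic_orbit)
  have "\<forall>c\<in>orbit. \<exists>T. split_after \<U> T c = {}"
    using split_after_eventually_empty[OF assms(1)] funpow_f_mem[OF assms(2)]
    by (auto simp: orbit_def)
  then obtain Tc where Tc: "\<And>c. c \<in> orbit \<Longrightarrow> split_after \<U> (Tc c) c = {}" by metis
  define T where "T = Max (Tc ` orbit)"
  have empty: "split_after \<U> T ((f ^^ r) z) = {}" for r
  proof -
    have "(f ^^ r) z \<in> orbit" by (simp add: orbit_def)
    then show ?thesis
      using Tc split_after_antimono[of "Tc ((f ^^ r) z)" T] \<open>finite orbit\<close>
      by (fastforce simp: T_def)
  qed
  show thesis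
    using that first_split_in_split_after[OF _ assms(2)] empty by (metis empty_iff)
qed

lemma same_itinerary_class_openin:
  assumes "finite_clopen_family S \<U>" "z \<in> S"
  shows "openin (top_of_set S) {w\<in>S. same_itinerary \<U> f w z}"
proof -
  obtain T where T: "\<And>w. w \<in> S \<Longrightarrow> \<forall>t\<le>T. same_cells \<U> ((f ^^ t) w) ((f ^^ t) z)
    \<Longrightarrow> same_itinerary \<U> f w z"
    using itinerary_finite_prefix[OF assms] by blast
  have "{w\<in>S. same_itinerary \<U> f w z} =
      S \<inter> \<Inter>((\<lambda>t. {w\<in>S. same_cells \<U> ((f ^^ t) w) ((f ^^ t) z)}) ` {..T})"
    using T by (auto simp: same_itinerary_def)
  also have "openin (top_of_set S) \<dots>"
    using same_cells_preimage_clopenin(1)[OF assms(1) continuous_on_funpow[OF continuous_f f_image]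
        image_subsetI[OF funpow_f_mem]]
    by (intro openin_Int_Inter) auto
  finally show ?thesis .
qed

lemma uniform_same_itinerary:
  assumes "finite_clopen_family S \<U>"
  obtains d where "d > 0"
    "\<And>x y. x \<in> S \<Longrightarrow> y \<in> S \<Longrightarrow> dist x y < d \<Longrightarrow> same_itinerary \<U> f x y"
proof -
  have "\<forall>z\<in>S. \<exists>V. open V \<and> {w\<in>S. same_itinerary \<U> f w z} = S \<inter> V"
    using same_itinerary_class_openin[OF assms] by (auto simp: openin_open)
  then obtain V where V: "\<And>z. z \<in> S \<Longrightarrow> open (V z) \<and> {w\<in>S. same_itinerary \<U> f w z} = S \<inter> V z"
    by metis
  have "z \<in> V z" if "z \<in> S" for z
    using V[OF that] same_itinerary_refl[of \<U> f z] that by blast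
  then have "S \<subseteq> \<Union>(V ` S)" by blast
  then obtain d where "d > 0" and d: "\<And>x. x \<in> S \<Longrightarrow> \<exists>G\<in>V ` S. ball x d \<subseteq> G"
    using Heine_Borel_lemma[OF compact] V by blast
  show thesis
  proof (rule that[OF \<open>d > 0\<close>])
    fix x y assume "x \<in> S" "y \<in> S" "dist x y < d"
    have "x \<in> ball x d" "y \<in> ball x d" using \<open>d > 0\<close> \<open>dist x y < d\<close> by auto
    then obtain z where "z \<in> S" "x \<in> V z" "y \<in> V z"
      using d[OF \<open>x \<in> S\<close>] by blast
    then have "same_itinerary \<U> f x z" "same_itinerary \<U> f y z"
      using V[OF \<open>z \<in> S\<close>] \<open>x \<in> S\<close> \<open>y \<in> S\<close> by blast+
    then show "same_itinerary \<U> f x y"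
      by (blast intro: same_itinerary_trans same_itinerary_sym)
  qed
qed

lemma inv_into_funpow_periodic:
  assumes "x \<in> S" "(f ^^ N) x = x" "k \<le> N"
  shows "(inv_into S f ^^ k) x = (f ^^ (N - k)) x"
proof -
  have "inj_on f S" using g_f by (metis inj_on_inverseI)
  then have "\<forall>x\<in>S. inv_into S f (f x) = x" by simp
  from funpow_left_inverse[OF this f_image assms(1,3)] show ?thesis
    using assms(2) by simp
qed

lemma fiter_eq_funpow_pair:
  assumes "x \<in> S" "y \<in> S"
  obtains t where "fiter S f i x = (f ^^ t) x" "fiter S f i y = (f ^^ t) y"
proof (cases "0 \<le> i")
  case True
  then show thesis by (intro that[of "nat i"]) (simp_all add: fiter_def)
next
  case False
  define k where "k = nat (- i)"
  obtain p where p: "p > 0" "(f ^^ p) x = x" using obtain_period[OF assms(1)] .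
  obtain q where q: "q > 0" "(f ^^ q) y = y" using obtain_period[OF assms(2)] .
  define N where "N = k * p * q"
  have "k \<le> N" using p q by (simp add: N_def)
  have "(f ^^ N) x = x"
    using funpow_mult_fixpoint[OF p(2), of "k * q"] by (simp add: N_def ac_simps)
  moreover have "(f ^^ N) y = y"
    using funpow_mult_fixpoint[OF q(2), of "k * p"] by (simp add: N_def ac_simps)
  ultimately show thesis
    using False inv_into_funpow_periodic[OF _ _ \<open>k \<le> N\<close>] assms
    by (intro that[of "N - k"]) (simp_all add: fiter_def k_def)
qed

lemma equicontinuous:
  assumes "zero_dim S"
  shows "equicontinuous_on S f"
  unfolding equicontinuous_on_def
proof (intro allI impI)
  fix e :: real assume "e > 0"
  obtain \<U> where \<U>: "finite_clopen_family S \<U>" "S \<subseteq> \<Union>\<U>" "\<forall>U\<in>\<U>. \<forall>a\<in>U. \<forall>b\<in>U. dist a b < e"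
    using zero_dim_fine_clopen_cover[OF compact assms \<open>e > 0\<close>] .
  obtain d where "d > 0" and d: "\<And>x y. x \<in> S \<Longrightarrow> y \<in> S \<Longrightarrow> dist x y < d \<Longrightarrow> same_itinerary \<U> f x y"
    using uniform_same_itinerary[OF \<U>(1)] by blast
  have "dist (fiter S f i x) (fiter S f i y) \<le> e"
    if xy: "x \<in> S" "y \<in> S" "dist x y \<le> d / 2" for x y i
  proof -
    obtain t where t: "fiter S f i x = (f ^^ t) x" "fiter S f i y = (f ^^ t) y"
      using fiter_eq_funpow_pair[OF xy(1,2)] .
    have "same_cells \<U> ((f ^^ t) x) ((f ^^ t) y)"
      using d[OF xy(1,2)] xy(3) \<open>d > 0\<close> by (simp add: same_itinerary_def)
    then show ?thesis
      unfolding t using same_cells_dist_less[OF \<U>(2,3) funpow_f_mem[OF xy(1)]] by fastforce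
  qed
  then show "\<exists>d>0. \<forall>x\<in>S. \<forall>y\<in>S. dist x y \<le> d \<longrightarrow> (\<forall>i. dist (fiter S f i x) (fiter S f i y) \<le> e)"
    using \<open>d > 0\<close> by (intro exI[of _ "d / 2"]) auto
qed

lemma periodic_orbit_isolated:
  assumes "y \<in> S" "e > 0"
  obtains \<epsilon> where "0 < \<epsilon>" "\<epsilon> \<le> e" "\<And>t. dist y ((f ^^ t) y) < \<epsilon> \<Longrightarrow> (f ^^ t) y = y"
proof -
  obtain n where "n > 0" "(f ^^ n) y = y" using obtain_period[OF assms(1)] .
  then have "finite (range (\<lambda>t. (f ^^ t) y))" by (rule finite_periodic_orbit)
  from finite_set_avoid[OF this, of y] obtain \<delta> where "\<delta> > 0"
    and \<delta>: "\<And>t. (f ^^ t) y \<noteq> y \<Longrightarrow> \<delta> \<le> dist y ((f ^^ t) y)"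
    by auto
  show thesis
    using \<open>e > 0\<close> \<open>\<delta> > 0\<close> \<delta> by (intro that[of "min e \<delta>"]) force+
qed

definition orbit_tracking :: "'a \<Rightarrow> real \<Rightarrow> 'a set set \<Rightarrow> real \<Rightarrow> bool" where
  "orbit_tracking y e \<U> \<rho> \<longleftrightarrow> finite_clopen_family S \<U> \<and> \<rho> > 0 \<and>
     (\<forall>x\<in>S. dist y x < \<rho> \<longrightarrow>
        (\<forall>z\<in>S. \<forall>t. same_cells \<U> z ((f ^^ t) x) \<longrightarrow> dist z ((f ^^ t) y) < e) \<and>
        (\<forall>t. same_cells \<U> x ((f ^^ t) x) \<longrightarrow> (f ^^ t) y = y))"

lemma orbit_tracking_exists:
  assumes "zero_dim S" "y \<in> S" "e > 0"
  shows "\<exists>\<U> \<rho>. orbit_tracking y e \<U> \<rho>"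
proof -
  obtain \<epsilon> where "0 < \<epsilon>" "\<epsilon> \<le> e" and isolated: "\<And>t. dist y ((f ^^ t) y) < \<epsilon> \<Longrightarrow> (f ^^ t) y = y"
    using periodic_orbit_isolated[OF assms(2,3)] by blast
  obtain \<U> where \<U>: "finite_clopen_family S \<U>" "S \<subseteq> \<Union>\<U>" "\<forall>U\<in>\<U>. \<forall>a\<in>U. \<forall>b\<in>U. dist a b < \<epsilon>"
    using zero_dim_fine_clopen_cover[OF compact assms(1) \<open>0 < \<epsilon>\<close>] .
  obtain \<rho> where "\<rho> > 0" and \<rho>: "\<And>x y. x \<in> S \<Longrightarrow> y \<in> S \<Longrightarrow> dist x y < \<rho> \<Longrightarrow> same_itinerary \<U> f x y"
    using uniform_same_itinerary[OF \<U>(1)] by blast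
  have "orbit_tracking y e \<U> \<rho>"
    unfolding orbit_tracking_def
  proof (intro conjI \<U>(1) \<open>\<rho> > 0\<close> ballI impI allI)
    fix x assume "x \<in> S" "dist y x < \<rho>"
    then have track: "same_cells \<U> ((f ^^ t) x) ((f ^^ t) y)" for t
      using \<rho>[of x y] assms(2) by (simp add: dist_commute same_itinerary_def)
    fix t
    show "dist z ((f ^^ t) y) < e" if "z \<in> S" "same_cells \<U> z ((f ^^ t) x)" for z
    proof -
      have "same_cells \<U> z ((f ^^ t) y)"
        using that(2) track[of t] by (simp add: same_cells_def)
      then show ?thesis
        using same_cells_dist_less[OF \<U>(2,3) that(1)] \<open>\<epsilon> \<le> e\<close> by fastforce
    qed
    show "(f ^^ t) y = y" if "same_cells \<U> x ((f ^^ t) x)"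
    proof (rule isolated)
      have "same_cells \<U> y ((f ^^ t) y)"
        using that track[of 0] track[of t] by (simp add: same_cells_def)
      then show "dist y ((f ^^ t) y) < \<epsilon>"
        using same_cells_dist_less[OF \<U>(2,3) assms(2)] by blast
    qed
  qed
  then show ?thesis by blast
qed

lemma pseudo_orbit_same_itinerary:
  assumes "\<And>x y. x \<in> S \<Longrightarrow> y \<in> S \<Longrightarrow> dist x y < d \<Longrightarrow> same_itinerary \<U> f x y"
    and "\<And>i. i \<le> m \<Longrightarrow> xs i \<in> S" "\<And>i. i < m \<Longrightarrow> dist (f (xs i)) (xs (Suc i)) < d"
    and "i \<le> m"
  shows "same_itinerary \<U> f (xs i) ((f ^^ i) (xs 0))"
  using assms(4)
proof (induction i)
  case (Suc i)
  have "same_itinerary \<U> f (xs (Suc i)) (f (xs i))"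
    using assms(1-3) Suc.prems f_image by (simp add: dist_commute image_subset_iff)
  moreover have "same_itinerary \<U> f (f (xs i)) (f ((f ^^ i) (xs 0)))"
    using same_itinerary_funpow[OF Suc.IH, of 1] Suc.prems by simp
  ultimately show ?case by (auto intro: same_itinerary_trans)
qed (simp add: same_itinerary_refl)

lemma orbit_tracking_shadows:
  assumes "orbit_tracking y e \<U> \<rho>" "dist y (xs 0) < \<rho>"
    and "\<forall>i\<le>m. xs i \<in> S" "xs 0 = xs m"
    and "\<And>i. i \<le> m \<Longrightarrow> same_cells \<U> (xs i) ((f ^^ i) (xs 0))"
  shows "(f ^^ m) y = y" "\<forall>i\<le>m. dist (xs i) ((f ^^ i) y) \<le> e"
proof -
  have "xs 0 \<in> S" using assms(3) by blast
  with assms(1,2) have track: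
      "\<And>z t. z \<in> S \<Longrightarrow> same_cells \<U> z ((f ^^ t) (xs 0)) \<Longrightarrow> dist z ((f ^^ t) y) < e"
      "\<And>t. same_cells \<U> (xs 0) ((f ^^ t) (xs 0)) \<Longrightarrow> (f ^^ t) y = y"
    unfolding orbit_tracking_def by blast+
  show "(f ^^ m) y = y"
    using track(2) assms(4) assms(5)[of m] by simp
  show "\<forall>i\<le>m. dist (xs i) ((f ^^ i) y) \<le> e"
    using track(1) assms(3,5) by (meson less_imp_le)
qed

lemma strict_periodic_shadowing:
  assumes "zero_dim S"
  shows "strict_periodic_shadowing S f"
  unfolding strict_periodic_shadowing_def
proof (intro allI impI)
  fix e :: real assume "e > 0"
  obtain \<U> \<rho> where tracking: "\<And>y. y \<in> S \<Longrightarrow> orbit_tracking y e (\<U> y) (\<rho> y)"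
    using orbit_tracking_exists[OF assms _ \<open>e > 0\<close>] by metis
  obtain Y where "Y \<subseteq> S" "finite Y" and Y: "S \<subseteq> (\<Union>y\<in>Y. ball y (\<rho> y))"
  proof (rule compactE_image[OF compact, of S "\<lambda>y. ball y (\<rho> y)"])
    show "S \<subseteq> (\<Union>y\<in>S. ball y (\<rho> y))"
      using tracking by (force simp: orbit_tracking_def)
  qed auto
  have "finite_clopen_family S (\<Union>y\<in>Y. \<U> y)"
    using tracking \<open>Y \<subseteq> S\<close> \<open>finite Y\<close>
    by (intro finite_clopen_family_UN) (auto simp: orbit_tracking_def)
  then obtain d where "d > 0" and d: "\<And>x y. x \<in> S \<Longrightarrow> y \<in> S \<Longrightarrow> dist x y < d
      \<Longrightarrow> same_itinerary (\<Union>y\<in>Y. \<U> y) f x y"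
    using uniform_same_itinerary by blast
  have "\<exists>p\<in>S. (f ^^ m) p = p \<and> (\<forall>i\<le>m. dist (xs i) ((f ^^ i) p) \<le> e)"
    if xs: "\<forall>i\<le>m. xs i \<in> S" "\<forall>i<m. dist (f (xs i)) (xs (Suc i)) \<le> d / 2" "xs 0 = xs m"
    for m xs
  proof -
    have "xs 0 \<in> S" using xs(1) by blast
    then obtain y where "y \<in> Y" "dist y (xs 0) < \<rho> y" using Y by force
    then have "y \<in> S" using \<open>Y \<subseteq> S\<close> by blast
    have cells: "same_cells (\<U> y) (xs i) ((f ^^ i) (xs 0))" if "i \<le> m" for i
    proof -
      have "same_itinerary (\<Union>y\<in>Y. \<U> y) f (xs i) ((f ^^ i) (xs 0))"
        using pseudo_orbit_same_itinerary[OF d, where m=m and xs=xs and i=i] xs \<open>d > 0\<close> that by force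
      then show ?thesis
        using \<open>y \<in> Y\<close> by (blast intro: same_itinerary_imp_same_cells same_itinerary_subfamily)
    qed
    note shadows = orbit_tracking_shadows[OF tracking[OF \<open>y \<in> S\<close>] \<open>dist y (xs 0) < \<rho> y\<close>
        xs(1,3) cells]
    show ?thesis
      using shadows \<open>y \<in> S\<close> by blast
  qed
  then show "\<exists>\<delta>>0. \<forall>m xs. 1 \<le> m \<and> (\<forall>i\<le>m. xs i \<in> S) \<and>
      (\<forall>i<m. dist (f (xs i)) (xs (Suc i)) \<le> \<delta>) \<and> xs 0 = xs m \<longrightarrow>
      (\<exists>p\<in>S. (f ^^ m) p = p \<and> (\<forall>i\<le>m. dist (xs i) ((f ^^ i) p) \<le> e))"
    using \<open>d > 0\<close> by (intro exI[of _ "d / 2"]) auto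
qed

end

theorem proposition1p1:
  fixes S :: "'a::metric_space set" and f :: "'a \<Rightarrow> 'a"
  assumes "compact S"
    and "\<exists>g. homeomorphism S S f g"
    and "zero_dim S"
    and "\<forall>x\<in>S. periodic_point f x"
  shows "equicontinuous_on S f \<and> strict_periodic_shadowing S f"
proof -
  obtain g where "homeomorphism S S f g" using assms(2) by blast
  then interpret periodic_homeomorphism S f g
    using assms(1,4) by unfold_locales
  show ?thesis
    using equicontinuous[OF assms(3)] strict_periodic_shadowing[OF assms(3)] by blast
qed

end
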